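(* Let $R$ be a unital ring with involution, let $a\in R$ be core invertible with core inverse $a^{\circledast}$, and let $b\in R$. Then the following conditions are equivalent: (1) $a\overset{\circledast}{\leq} b$; (2) $b a^{\circledast} b=a$ and $a^{\circledast} b a^{\circledast}=a^{\circledast}$; (3) $a a^{\circledast} b=a=b a^{\circledast} a$; (4) $b-a\in {}^{\circ}a\cap (a^{*})^{\circ}$, i.e. $(b-a)a=0$ and $a^{*}(b-a)=0$; (5) $b-a\in (1-aa^{\circledast})R\cap R(1-aa^{\circledast})$; (6) $b-a\in {}^{\circ}(aa^{\circledast})\cap (aa^{\circledast})^{\circ}$, i.e. $(b-a)aa^{\circledast}=0$ and $aa^{\circledast}(b-a)=0$.
   Context: $R$ is a ring with identity and an involution $x\mapsto x^{*}$ (so $(x^* )^*=x$, $(xy)^*=y^*x^*$, $(x+y)^*=x^*+y^*$). An element $a\in R$ is core invertible if there exists $x\in R$ with $axa=a$, $xR=aR$ and $Rx=Ra^{*}$; such $x$ is unique, called the core inverse of $a$ and denoted $a^{\circledast}$. For $a$ core invertible and $b\in R$, the core partial order is defined by $a\overset{\circledast}{\leq} b$ iff $a^{\circledast}a=a^{\circledast}b$ and $aa^{\circledast}=ba^{\circledast}$. For $c\in R$, ${}^{\circ}c=\{x\in R: xc=0\}$ and $c^{\circ}=\{x\in R: cx=0\}$; $cR=\{cx:x\in R\}$, $Rc=\{xc:x\in R\}$. *)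

theory Defs
  imports Main
begin

class ring_1_involution = ring_1 +
  fixes invol :: "'a \<Rightarrow> 'a"
  assumes invol_invol: "invol (invol x) = x"
    and invol_mult: "invol (x * y) = invol y * invol x"
    and invol_add: "invol (x + y) = invol x + invol y"

definition right_ideal :: "'a::ring_1 \<Rightarrow> 'a set" where
  "right_ideal c = {c * x | x. True}"

definition left_ideal :: "'a::ring_1 \<Rightarrow> 'a set" where
  "left_ideal c = {x * c | x. True}"

definition left_annihilator :: "'a::ring_1 \<Rightarrow> 'a set" where
  "left_annihilator c = {x. x * c = 0}"

definition right_annihilator :: "'a::ring_1 \<Rightarrow> 'a set" where
  "right_annihilator c = {x. c * x = 0}"

definition is_core_inverse :: "'a::ring_1_involution \<Rightarrow> 'a \<Rightarrow> bool" where
  "is_core_inverse a x \<longleftrightarrow> a * x * a = a \<and> right_ideal x = right_ideal a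
     \<and> left_ideal x = left_ideal (invol a)"

definition core_invertible :: "'a::ring_1_involution \<Rightarrow> bool" where
  "core_invertible a \<longleftrightarrow> (\<exists>x. is_core_inverse a x)"

definition core_inv :: "'a::ring_1_involution \<Rightarrow> 'a" where
  "core_inv a = (THE x. is_core_inverse a x)"

definition core_order :: "'a::ring_1_involution \<Rightarrow> 'a \<Rightarrow> bool" where
  "core_order a b \<longleftrightarrow> core_inv a * a = core_inv a * b \<and> a * core_inv a = b * core_inv a"

end

theory Submission
  imports Defs
begin

text \<open>Let \<open>x\<close> be the core inverse of \<open>a\<close> and \<open>p = a x\<close>. Then \<open>p\<close> is a Hermitian idempotent with
  \<open>p a = a\<close> and \<open>a\<^sup>* p = a\<^sup>*\<close>, so \<open>p\<close> has the same left annihilator as \<open>a\<close> and the same right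
  annihilator as \<open>a\<^sup>*\<close>, and these annihilators are \<open>R(1 - p)\<close> and \<open>(1 - p)R\<close>. Hence conditions
  (4)--(6) all say \<open>(b - a) a = 0\<close> and \<open>p (b - a) = 0\<close>. Since \<open>x\<close> is a reflexive inverse of \<open>a\<close> with
  \<open>x a\<^sup>2 = a\<close> and \<open>a x\<^sup>2 = x\<close>, these two equations are equivalent to \<open>x b = x a\<close> and
  \<open>b x = a x\<close>, i.e. to (1); conditions (2) and (3) are rearrangements of (1) valid for any
  reflexive inverse.\<close>

lemma left_annihilator_eqI:
  fixes c e :: "'a::ring_1"
  assumes "c = e * c" and "e = c * z"
  shows "left_annihilator c = left_annihilator e"
proof -
  have "y * c = 0 \<longleftrightarrow> y * e = 0" for y
    using assms by (metis mult.assoc mult_zero_left)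
  then show ?thesis unfolding left_annihilator_def by blast
qed

lemma right_annihilator_eqI:
  fixes c e :: "'a::ring_1"
  assumes "c = c * e" and "e = z * c"
  shows "right_annihilator c = right_annihilator e"
proof -
  have "c * y = 0 \<longleftrightarrow> e * y = 0" for y
    using assms by (metis mult.assoc mult_zero_right)
  then show ?thesis unfolding right_annihilator_def by blast
qed

lemma right_ideal_one_minus_idempotent:
  fixes e :: "'a::ring_1"
  assumes "e * e = e"
  shows "right_ideal (1 - e) = right_annihilator e"
proof -
  have "(\<exists>r. y = (1 - e) * r) \<longleftrightarrow> e * y = 0" for y
  proof
    assume "\<exists>r. y = (1 - e) * r"
    then obtain r where "y = (1 - e) * r" by blast
    then show "e * y = 0" using assms by (simp add: right_diff_distrib mult.assoc[symmetric])
  next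
    assume "e * y = 0"
    then have "y = (1 - e) * y" by (simp add: left_diff_distrib)
    then show "\<exists>r. y = (1 - e) * r" by blast
  qed
  then show ?thesis unfolding right_ideal_def right_annihilator_def by blast
qed

lemma left_ideal_one_minus_idempotent:
  fixes e :: "'a::ring_1"
  assumes "e * e = e"
  shows "left_ideal (1 - e) = left_annihilator e"
proof -
  have "(\<exists>r. y = r * (1 - e)) \<longleftrightarrow> y * e = 0" for y
  proof
    assume "\<exists>r. y = r * (1 - e)"
    then obtain r where "y = r * (1 - e)" by blast
    then show "y * e = 0" using assms by (simp add: left_diff_distrib mult.assoc)
  next
    assume "y * e = 0"
    then have "y = y * (1 - e)" by (simp add: right_diff_distrib)
    then show "\<exists>r. y = r * (1 - e)" by blast
  qed
  then show ?thesis unfolding left_ideal_def left_annihilator_def by blast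
qed

lemma reflexive_inverse_left_eq_iff:
  fixes a x b :: "'a::ring_1"
  assumes "a * x * a = a" and "x * a * x = x"
  shows "x * b = x * a \<longleftrightarrow> a * x * b = a"
  using assms by (metis mult.assoc)

lemma reflexive_inverse_right_eq_iff:
  fixes a x b :: "'a::ring_1"
  assumes "a * x * a = a" and "x * a * x = x"
  shows "b * x = a * x \<longleftrightarrow> b * x * a = a"
  using assms by (metis mult.assoc)

lemma reflexive_inverse_both_eq_iff:
  fixes a x b :: "'a::ring_1"
  assumes "a * x * a = a" and "x * a * x = x"
  shows "(x * b = x * a \<and> b * x = a * x) \<longleftrightarrow> (b * x * b = a \<and> x * b * x = x)"
  using assms by (metis mult.assoc)

lemma right_mult_eq_iff_square:
  fixes a x b :: "'a::ring_1"
  assumes "x * a * a = a" and "a * x * x = x"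
  shows "b * x = a * x \<longleftrightarrow> b * a = a * a"
  using assms by (metis mult.assoc)

lemma self_in_right_ideal: "c \<in> right_ideal c"
  unfolding right_ideal_def by (metis (mono_tags) mem_Collect_eq mult_1_right)

lemma self_in_left_ideal: "c \<in> left_ideal c"
  unfolding left_ideal_def by (metis (mono_tags) mem_Collect_eq mult_1_left)

lemma is_core_inverse_hermitian:
  fixes a x :: "'a::ring_1_involution"
  assumes "is_core_inverse a x"
  shows "invol (a * x) = a * x"
proof -
  have axa: "a * x * a = a" and "x \<in> left_ideal (invol a)"
    using assms self_in_left_ideal[of x] unfolding is_core_inverse_def by auto
  then obtain w where w: "x = w * invol a" unfolding left_ideal_def by blast
  have "invol a = invol a * invol (a * x)"
    by (metis axa invol_mult mult.assoc)
  then have "x = x * invol (a * x)"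
    using w by (metis mult.assoc)
  then have p: "a * x = a * x * invol (a * x)"
    by (metis mult.assoc)
  then have "invol (a * x) = a * x * invol (a * x)"
    by (metis invol_mult invol_invol)
  then show ?thesis using p by simp
qed

lemma is_core_inverse_equations:
  fixes a x :: "'a::ring_1_involution"
  assumes "is_core_inverse a x"
  shows "a * x * a = a" "x * a * x = x" "x * a * a = a" "a * x * x = x"
proof -
  show axa: "a * x * a = a" using assms unfolding is_core_inverse_def by blast
  have "x \<in> right_ideal a" "a \<in> right_ideal x"
    using assms self_in_right_ideal unfolding is_core_inverse_def by blast+
  then obtain u v where u: "x = a * u" and v: "a = x * v"
    unfolding right_ideal_def by blast
  have "x \<in> left_ideal (invol a)"
    using assms self_in_left_ideal unfolding is_core_inverse_def by blast
  then obtain w where w: "x = w * invol a" unfolding left_ideal_def by blast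
  have "invol a * (a * x) = invol a"
    by (metis axa invol_mult is_core_inverse_hermitian[OF assms])
  then show xax: "x * a * x = x"
    using w by (metis mult.assoc)
  show "x * a * a = a" using v xax by (metis mult.assoc)
  show "a * x * x = x" using u axa by (metis mult.assoc)
qed

lemma is_core_inverse_unique:
  fixes a x y :: "'a::ring_1_involution"
  assumes x: "is_core_inverse a x" and y: "is_core_inverse a y"
  shows "x = y"
proof -
  note X = is_core_inverse_equations[OF x] and Y = is_core_inverse_equations[OF y]
  have "a * x = invol (a * y * a * x)"
    using Y(1) is_core_inverse_hermitian[OF x] by simp
  also have "\<dots> = a * x * (a * y)"
    using is_core_inverse_hermitian[OF x] is_core_inverse_hermitian[OF y]
    by (simp add: invol_mult mult.assoc)
  also have "\<dots> = a * y"
    using X(1) by (simp add: mult.assoc[symmetric])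
  finally have axy: "a * x = a * y" .
  have "x = y * a * x"
    using X(4) Y(3) by (metis mult.assoc)
  also have "\<dots> = y"
    using axy Y(2) by (metis mult.assoc)
  finally show ?thesis .
qed

lemma core_inv_is_core_inverse:
  assumes "core_invertible a"
  shows "is_core_inverse a (core_inv a)"
  using assms is_core_inverse_unique unfolding core_invertible_def core_inv_def
  by (metis theI)

theorem theorem2p3:
  fixes a b :: "'a::ring_1_involution"
  assumes "core_invertible a"
  shows "(core_order a b \<longleftrightarrow>
            (b * core_inv a * b = a \<and> core_inv a * b * core_inv a = core_inv a))
       \<and> (core_order a b \<longleftrightarrow>
            (a * core_inv a * b = a \<and> a = b * core_inv a * a))
       \<and> (core_order a b \<longleftrightarrow>
            b - a \<in> left_annihilator a \<inter> right_annihilator (invol a))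
       \<and> (core_order a b \<longleftrightarrow>
            b - a \<in> right_ideal (1 - a * core_inv a) \<inter> left_ideal (1 - a * core_inv a))
       \<and> (core_order a b \<longleftrightarrow>
            b - a \<in> left_annihilator (a * core_inv a) \<inter> right_annihilator (a * core_inv a))"
proof -
  define x where "x = core_inv a"
  have core: "is_core_inverse a x"
    using core_inv_is_core_inverse[OF assms] by (simp add: x_def)
  note eqs = is_core_inverse_equations[OF core]
  have hermitian: "invol (a * x) = a * x" by (rule is_core_inverse_hermitian[OF core])
  have idem: "a * x * (a * x) = a * x" using eqs(1) by (simp add: mult.assoc[symmetric])
  have left_ann: "left_annihilator (a * x) = left_annihilator a"
    using left_annihilator_eqI[of a "a * x" x] eqs(1) by simp
  have right_ann: "right_annihilator (a * x) = right_annihilator (invol a)"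
  proof (rule right_annihilator_eqI[of "invol a" "a * x" "invol x", symmetric])
    show "invol a = invol a * (a * x)"
      by (metis eqs(1) hermitian invol_mult)
    show "a * x = invol x * invol a"
      by (metis hermitian invol_mult)
  qed
  have core_order_iff: "core_order a b \<longleftrightarrow> x * b = x * a \<and> b * x = a * x"
    unfolding core_order_def x_def by auto
  have annihilated_iff: "b - a \<in> left_annihilator a \<inter> right_annihilator (invol a)
      \<longleftrightarrow> b * a = a * a \<and> a * x * b = a"
    unfolding right_ann[symmetric] unfolding left_annihilator_def right_annihilator_def
    by (simp add: left_diff_distrib right_diff_distrib eqs(1))
  have order_iff_annihilated: "core_order a b
      \<longleftrightarrow> b - a \<in> left_annihilator a \<inter> right_annihilator (invol a)"
    using core_order_iff annihilated_iff reflexive_inverse_left_eq_iff[OF eqs(1,2)]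
      right_mult_eq_iff_square[OF eqs(3,4)] by blast
  show ?thesis
    unfolding x_def[symmetric] left_ann right_ann
      right_ideal_one_minus_idempotent[OF idem] left_ideal_one_minus_idempotent[OF idem]
    using core_order_iff order_iff_annihilated reflexive_inverse_both_eq_iff[OF eqs(1,2)]
      reflexive_inverse_left_eq_iff[OF eqs(1,2)] reflexive_inverse_right_eq_iff[OF eqs(1,2)]
    by (metis Int_commute)
qed

end
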